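(* Assume $C_n>0$ and $\lambda\ge\phi\, n^{1/3}/C_n^{1/3}$ for some constant $\phi>0$. Let $[i_s,i_t]\in\mathcal P$ be a bin of the key partition such that the offline optimal takes the form of Structure 1 or Structure 2 on some sub-interval of $[i_s,i_t]$. Let $\mu_{\mathrm{th}}=\sqrt{\frac{36(B+G)^3C_n^{1/3}\log n}{\phi\, n^{1/3}}}$. If $C_n\le\left(\frac{B^2\phi}{144(B+G)^3\log n}\right)^3 n$, then $$\mathrm{gap}_{\min}(-B,[i_s,i_t])\vee\mathrm{gap}_{\min}(B,[i_s,i_t])\ge\mu_{\mathrm{th}}.$$
   Context: Setting: $n\ge 3$, $B\ge 1$, $G\ge B$, labels $y_1,\dots,y_n\in[-G,G]$; $[a,b]=\{a,\dots,b\}$; $a\vee b=\max\{a,b\}$. Offline optimal: $u_1,\dots,u_n$ is an optimal solution of: minimize $\frac12\sum_{t=1}^n(y_t-\tilde u_t)^2$ subject to $\sum_{t=2}^{n}|\tilde u_t-\tilde u_{t-1}|\le C_n$ and $-B\le\tilde u_t\le B$; with optimal dual variables $\lambda\ge0$ (TV constraint) and $\gamma^\pm_t\ge0$ (box constraints) satisfying the KKT conditions: there are $s_t\in[-1,1]$ with $s_t=\mathrm{sign}(u_{t+1}-u_t)$ whenever $u_{t+1}\ne u_t$, $s_0=s_n=0$, $u_t-y_t=\lambda(s_t-s_{t-1})+\gamma_t^--\gamma_t^+$, and $\lambda(\sum_{t=2}^n|u_t-u_{t-1}|-C_n)=0$, $\gamma_t^-(u_t+B)=0$, $\gamma_t^+(u_t-B)=0$.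 Structure 1 on $[a,b]\subseteq\{2,\dots,n-1\}$: $u_j=u_a\in(-B,B)$ for all $j\in[a,b]$, $u_b>u_{b+1}$ and $u_a>u_{a-1}$. Structure 2 on $[a,b]\subseteq\{2,\dots,n-1\}$: $u_j=u_a\in(-B,B)$ for all $j\in[a,b]$, $u_b<u_{b+1}$ and $u_a<u_{a-1}$. For a bin $[a,b]$ and $\beta\in\mathbb R$, $\mathrm{gap}_{\min}(\beta,[a,b])=\min_{j\in[a,b]}|u_j-\beta|$. Key partition $\mathcal P$: $[n]$ is partitioned greedily into consecutive bins: the first bin starts at $i_s=1$; a bin starting at $i_s$ ends at the largest $i_t\in[i_s,n]$ such that $\sum_{j=i_s+1}^{i_t}|u_j-u_{j-1}|\le B/\sqrt{i_t-i_s+1}$; the next bin starts at $i_t+1$, until $n$ is covered. *)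

theory Defs
  imports Complex_Main
begin

definition tv :: "(nat \<Rightarrow> real) \<Rightarrow> nat \<Rightarrow> nat \<Rightarrow> real" where
  "tv u a b = (\<Sum>j\<in>{a+1..b}. \<bar>u j - u (j - 1)\<bar>)"

definition feasible :: "nat \<Rightarrow> real \<Rightarrow> real \<Rightarrow> (nat \<Rightarrow> real) \<Rightarrow> bool" where
  "feasible n B Cn v \<longleftrightarrow> tv v 1 n \<le> Cn \<and> (\<forall>t\<in>{1..n}. -B \<le> v t \<and> v t \<le> B)"

definition objective :: "nat \<Rightarrow> (nat \<Rightarrow> real) \<Rightarrow> (nat \<Rightarrow> real) \<Rightarrow> real" where
  "objective n y v = (1/2) * (\<Sum>t\<in>{1..n}. (y t - v t)^2)"

definition offline_optimal :: "nat \<Rightarrow> real \<Rightarrow> real \<Rightarrow> (nat \<Rightarrow> real) \<Rightarrow> (nat \<Rightarrow> real) \<Rightarrow> bool" where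
  "offline_optimal n B Cn y u \<longleftrightarrow> feasible n B Cn u \<and>
     (\<forall>v. feasible n B Cn v \<longrightarrow> objective n y u \<le> objective n y v)"

definition KKT :: "nat \<Rightarrow> real \<Rightarrow> real \<Rightarrow> (nat \<Rightarrow> real) \<Rightarrow> (nat \<Rightarrow> real) \<Rightarrow> real
    \<Rightarrow> (nat \<Rightarrow> real) \<Rightarrow> (nat \<Rightarrow> real) \<Rightarrow> (nat \<Rightarrow> real) \<Rightarrow> bool" where
  "KKT n B Cn y u lam gm gp s \<longleftrightarrow>
     lam \<ge> 0 \<and> (\<forall>t\<in>{1..n}. gm t \<ge> 0 \<and> gp t \<ge> 0) \<and>
     (\<forall>t\<in>{0..n}. -1 \<le> s t \<and> s t \<le> 1) \<and>
     (\<forall>t\<in>{1..<n}. u (t+1) \<noteq> u t \<longrightarrow> s t = sgn (u (t+1) - u t)) \<and>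
     s 0 = 0 \<and> s n = 0 \<and>
     (\<forall>t\<in>{1..n}. u t - y t = lam * (s t - s (t - 1)) + gm t - gp t) \<and>
     lam * (tv u 1 n - Cn) = 0 \<and>
     (\<forall>t\<in>{1..n}. gm t * (u t + B) = 0 \<and> gp t * (u t - B) = 0)"

definition structure1 :: "nat \<Rightarrow> real \<Rightarrow> (nat \<Rightarrow> real) \<Rightarrow> nat \<Rightarrow> nat \<Rightarrow> bool" where
  "structure1 n B u a b \<longleftrightarrow> 2 \<le> a \<and> a \<le> b \<and> b \<le> n - 1 \<and>
     (\<forall>j\<in>{a..b}. u j = u a) \<and> -B < u a \<and> u a < B \<and> u b > u (b+1) \<and> u a > u (a - 1)"

definition structure2 :: "nat \<Rightarrow> real \<Rightarrow> (nat \<Rightarrow> real) \<Rightarrow> nat \<Rightarrow> nat \<Rightarrow> bool" where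
  "structure2 n B u a b \<longleftrightarrow> 2 \<le> a \<and> a \<le> b \<and> b \<le> n - 1 \<and>
     (\<forall>j\<in>{a..b}. u j = u a) \<and> -B < u a \<and> u a < B \<and> u b < u (b+1) \<and> u a < u (a - 1)"

definition gap_min :: "(nat \<Rightarrow> real) \<Rightarrow> real \<Rightarrow> nat \<Rightarrow> nat \<Rightarrow> real" where
  "gap_min u \<beta> a b = Min ((\<lambda>j. \<bar>u j - \<beta>\<bar>) ` {a..b})"

definition bin_end :: "nat \<Rightarrow> real \<Rightarrow> (nat \<Rightarrow> real) \<Rightarrow> nat \<Rightarrow> nat" where
  "bin_end n B u a = (GREATEST i. a \<le> i \<and> i \<le> n \<and> tv u a i \<le> B / sqrt (real (i - a + 1)))"

inductive bin_start :: "nat \<Rightarrow> real \<Rightarrow> (nat \<Rightarrow> real) \<Rightarrow> nat \<Rightarrow> bool"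
  for n B u where
  first: "bin_start n B u 1"
| step: "bin_start n B u a \<Longrightarrow> a \<le> n \<Longrightarrow> bin_start n B u (bin_end n B u a + 1)"

definition key_bin :: "nat \<Rightarrow> real \<Rightarrow> (nat \<Rightarrow> real) \<Rightarrow> nat \<Rightarrow> nat \<Rightarrow> bool" where
  "key_bin n B u a b \<longleftrightarrow> bin_start n B u a \<and> a \<le> n \<and> b = bin_end n B u a"

end

theory Submission
  imports Defs
begin

text \<open>A bin of the key partition has total variation at most \<open>B\<close>, so on it \<open>u\<close> cannot come
  closer than \<open>B/2\<close> to both \<open>-B\<close> and \<open>B\<close>. The growth condition on \<open>C\<^sub>n\<close> makes the threshold
  \<open>\<mu>\<^sub>t\<^sub>h\<close> at most \<open>B/2\<close>.\<close>

lemma tv_Suc: "a \<le> k \<Longrightarrow> tv u a (Suc k) = tv u a k + \<bar>u (Suc k) - u k\<bar>"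
  unfolding tv_def by (simp add: add.commute)

lemma abs_diff_le_tv: "j \<le> k \<Longrightarrow> \<bar>u k - u j\<bar> \<le> tv u j k"
proof (induction k rule: dec_induct)
  case base
  then show ?case by (simp add: tv_def)
next
  case (step k)
  have "\<bar>u (Suc k) - u j\<bar> \<le> \<bar>u k - u j\<bar> + \<bar>u (Suc k) - u k\<bar>" by linarith
  with step tv_Suc[of j k u] show ?case by linarith
qed

lemma tv_mono: "a \<le> j \<Longrightarrow> k \<le> b \<Longrightarrow> tv u j k \<le> tv u a b"
  unfolding tv_def by (rule sum_mono2) auto

lemma abs_diff_le_tv_interval:
  assumes "i \<in> {a..b}" "j \<in> {a..b}"
  shows "\<bar>u i - u j\<bar> \<le> tv u a b"
proof (cases "j \<le> i")
  case True
  then show ?thesis using assms abs_diff_le_tv[of j i u] tv_mono[of a j i b u] by auto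
next
  case False
  then show ?thesis using assms abs_diff_le_tv[of i j u] tv_mono[of a i j b u] by auto
qed

lemma key_bin_tv_le:
  assumes "key_bin n B u a b" "B \<ge> 0"
  shows "a \<le> b" "tv u a b \<le> B"
proof -
  let ?P = "\<lambda>i. a \<le> i \<and> i \<le> n \<and> tv u a i \<le> B / sqrt (real (i - a + 1))"
  have "a \<le> n" and b: "b = bin_end n B u a"
    using assms(1) unfolding key_bin_def by auto
  then have "?P a" using assms(2) by (simp add: tv_def)
  then have Pb: "?P b" unfolding b bin_end_def
    by (rule GreatestI_nat[of _ a n]) auto
  then show "a \<le> b" by simp
  have "B * 1 \<le> B * sqrt (real (b - a + 1))"
    using assms(2) by (intro mult_left_mono) auto
  then have "B / sqrt (real (b - a + 1)) \<le> B"
    by (simp add: divide_le_eq)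
  with Pb show "tv u a b \<le> B" by linarith
qed

lemma gap_min_attained:
  assumes "a \<le> b"
  obtains j where "j \<in> {a..b}" "gap_min u \<beta> a b = \<bar>u j - \<beta>\<bar>"
proof -
  have "gap_min u \<beta> a b \<in> (\<lambda>j. \<bar>u j - \<beta>\<bar>) ` {a..b}"
    unfolding gap_min_def using assms by (intro Min_in) auto
  then show ?thesis using that by blast
qed

lemma gap_min_add_ge:
  assumes "a \<le> b"
  shows "\<bar>\<beta> - \<alpha>\<bar> - tv u a b \<le> gap_min u \<alpha> a b + gap_min u \<beta> a b"
proof -
  obtain i where i: "i \<in> {a..b}" "gap_min u \<alpha> a b = \<bar>u i - \<alpha>\<bar>"
    using gap_min_attained[OF assms] .
  obtain j where j: "j \<in> {a..b}" "gap_min u \<beta> a b = \<bar>u j - \<beta>\<bar>"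
    using gap_min_attained[OF assms] .
  have "\<bar>u j - u i\<bar> \<le> tv u a b" using abs_diff_le_tv_interval[OF j(1) i(1)] .
  with i(2) j(2) show ?thesis by linarith
qed

lemma cube_mult_powr_third:
  fixes X x :: real
  assumes "X \<ge> 0" "x \<ge> 0"
  shows "(X^3 * x) powr (1/3) = X * x powr (1/3)"
proof -
  have "(X^3) powr (1/3) = X"
  proof (cases "X = 0")
    case False
    then have "X^3 = X powr 3" using assms(1) by (simp add: powr_realpow)
    then have "(X^3) powr (1/3) = X powr (3 * (1/3))" by (simp add: powr_powr)
    then show ?thesis using assms(1) by simp
  qed simp
  then show ?thesis using assms by (simp add: powr_mult)
qed

lemma sqrt_threshold_le_half:
  fixes K \<phi> B Cn x :: real
  assumes "K > 0" "\<phi> > 0" "B \<ge> 0" "x > 0" "Cn \<ge> 0"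
    and "Cn \<le> (B^2 * \<phi> / (4 * K))^3 * x"
  shows "sqrt (K * Cn powr (1/3) / (\<phi> * x powr (1/3))) \<le> B / 2"
proof -
  define X where "X = B^2 * \<phi> / (4 * K)"
  have "X \<ge> 0" unfolding X_def using assms(1-3) by simp
  have "Cn powr (1/3) \<le> (X^3 * x) powr (1/3)"
    using assms(5,6) unfolding X_def by (intro powr_mono2) auto
  also have "\<dots> = X * x powr (1/3)"
    using \<open>X \<ge> 0\<close> assms(4) by (simp add: cube_mult_powr_third)
  finally have "K * Cn powr (1/3) \<le> K * (X * x powr (1/3))"
    using assms(1) by simp
  also have "\<dots> = (B/2)^2 * (\<phi> * x powr (1/3))"
    unfolding X_def using assms(1) by (simp add: field_simps power2_eq_square)
  finally have "K * Cn powr (1/3) / (\<phi> * x powr (1/3)) \<le> (B/2)^2"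
    using assms(2,4) by (simp add: divide_le_eq)
  then show ?thesis using assms(3) by (intro real_le_lsqrt) auto
qed

theorem lemma7:
  fixes n :: nat and B G Cn lam \<phi> :: real
    and y u gm gp s :: "nat \<Rightarrow> real" and i_s i_t :: nat
  assumes "n \<ge> 3" and "B \<ge> 1" and "G \<ge> B"
    and "\<forall>t\<in>{1..n}. -G \<le> y t \<and> y t \<le> G"
    and "offline_optimal n B Cn y u"
    and "KKT n B Cn y u lam gm gp s"
    and "Cn > 0" and "\<phi> > 0"
    and "lam \<ge> \<phi> * real n powr (1/3) / Cn powr (1/3)"
    and "key_bin n B u i_s i_t"
    and "\<exists>a b. i_s \<le> a \<and> b \<le> i_t \<and> (structure1 n B u a b \<or> structure2 n B u a b)"
    and "Cn \<le> (B^2 * \<phi> / (144 * (B + G)^3 * ln (real n))) ^ 3 * real n"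
  shows "max (gap_min u (-B) i_s i_t) (gap_min u B i_s i_t)
           \<ge> sqrt (36 * (B + G)^3 * Cn powr (1/3) * ln (real n) / (\<phi> * real n powr (1/3)))"
proof -
  define K where "K = 36 * (B + G)^3 * ln (real n)"
  have "K > 0" unfolding K_def using assms(1-3) by simp
  have bin: "i_s \<le> i_t" "tv u i_s i_t \<le> B"
    using key_bin_tv_le[OF assms(10)] assms(2) by auto
  have "2 * B - B \<le> gap_min u (-B) i_s i_t + gap_min u B i_s i_t"
    using gap_min_add_ge[OF bin(1), of B "-B" u] bin(2) assms(2) by simp
  then have "B / 2 \<le> max (gap_min u (-B) i_s i_t) (gap_min u B i_s i_t)" by linarith
  moreover have "sqrt (K * Cn powr (1/3) / (\<phi> * real n powr (1/3))) \<le> B / 2"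
    using assms(1,2,7,8,12) \<open>K > 0\<close>
    by (intro sqrt_threshold_le_half) (auto simp: K_def mult.assoc)
  ultimately show ?thesis by (simp add: K_def mult_ac)
qed

end
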